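(* Let $G$ be a graph, $k,\ell\ge1$, $S$ an independent set of size $k$, and $J_0=S,J_1,\dots,J_\ell$ independent sets of $G$. Define $\mathcal{C}_0=\{\{(S,k)\}\}$ and, for $i\in\{1,\dots,\ell\}$, let $\mathcal{C}_i$ contain, for every $C\in\mathcal{C}_{i-1}$ and every constraint $(X,b)\in C$, the constraint set $C'$ consisting of: $(N(X)\cap J_i,1)$; $(X\cap J_i,b-1)$ if $b\ge2$ (nothing if $b=1$); and $(X'\cap J_i,b')$ for every other constraint $(X',b')\in C$. Let $i\in\{0,\dots,\ell\}$. If $Z\subseteq J_i$ is an independent set of size $k$ that satisfies at least one constraint set in $\mathcal{C}_i$, then $Z$ is reachable from $S$ by token slides, i.e., there is a sequence $S=I_0,I_1,\dots,I_m=Z$ of independent sets of size $k$ in $G$ such that each $I_{j+1}=(I_j\setminus\{u\})\cup\{v\}$ for some $u\in I_j$, $v\notin I_j$ with $\{u,v\}\in E(G)$.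
   Context: A constraint is a pair $(X,b)$ with $X\subseteq V(G)$ and $b$ a positive integer. A set $Z\subseteq V(G)$ satisfies $(X,b)$ if $|Z\cap X|=b$, and satisfies a constraint set $C$ if it satisfies every constraint in $C$. For $X\subseteq V(G)$, $N(X)=\{v\notin X: v\text{ adjacent to some }u\in X\}$. In the paper, $J_1,\dots,J_\ell$ are members of an independence covering family for $(G,k)$. *)

theory Defs
  imports Main
begin

definition simple_graph :: "'a set \<Rightarrow> ('a \<Rightarrow> 'a \<Rightarrow> bool) \<Rightarrow> bool" where
  "simple_graph V E \<longleftrightarrow> finite V \<and> (\<forall>u v. E u v \<longrightarrow> u \<in> V \<and> v \<in> V)
     \<and> (\<forall>u v. E u v \<longrightarrow> E v u) \<and> (\<forall>u. \<not> E u u)"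

definition indep :: "'a set \<Rightarrow> ('a \<Rightarrow> 'a \<Rightarrow> bool) \<Rightarrow> 'a set \<Rightarrow> bool" where
  "indep V E I \<longleftrightarrow> I \<subseteq> V \<and> (\<forall>u\<in>I. \<forall>v\<in>I. \<not> E u v)"

definition nbhd :: "'a set \<Rightarrow> ('a \<Rightarrow> 'a \<Rightarrow> bool) \<Rightarrow> 'a set \<Rightarrow> 'a set" where
  "nbhd V E X = {v \<in> V. v \<notin> X \<and> (\<exists>u\<in>X. E u v)}"

type_synonym 'a constr = "'a set \<times> nat"

definition satisfies :: "'a set \<Rightarrow> 'a constr \<Rightarrow> bool" where
  "satisfies Z c \<longleftrightarrow> card (Z \<inter> fst c) = snd c"

definition satisfies_set :: "'a set \<Rightarrow> 'a constr set \<Rightarrow> bool" where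
  "satisfies_set Z C \<longleftrightarrow> (\<forall>c\<in>C. satisfies Z c)"

definition branch ::
  "'a set \<Rightarrow> ('a \<Rightarrow> 'a \<Rightarrow> bool) \<Rightarrow> 'a set \<Rightarrow> 'a constr set \<Rightarrow> 'a constr \<Rightarrow> 'a constr set" where
  "branch V E J C c =
     {(nbhd V E (fst c) \<inter> J, 1)}
     \<union> (if snd c \<ge> 2 then {(fst c \<inter> J, snd c - 1)} else {})
     \<union> {(X' \<inter> J, b') | X' b'. (X', b') \<in> C \<and> (X', b') \<noteq> c}"

fun Cfam ::
  "'a set \<Rightarrow> ('a \<Rightarrow> 'a \<Rightarrow> bool) \<Rightarrow> 'a set \<Rightarrow> nat \<Rightarrow> (nat \<Rightarrow> 'a set) \<Rightarrow> nat \<Rightarrow> 'a constr set set" where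
  "Cfam V E S k J 0 = {{(S, k)}}"
| "Cfam V E S k J (Suc i) =
     {branch V E (J (Suc i)) C c | C c. C \<in> Cfam V E S k J i \<and> c \<in> C}"

definition slide :: "('a \<Rightarrow> 'a \<Rightarrow> bool) \<Rightarrow> 'a set \<Rightarrow> 'a set \<Rightarrow> bool" where
  "slide E I I' \<longleftrightarrow> (\<exists>u v. u \<in> I \<and> v \<notin> I \<and> E u v \<and> I' = (I - {u}) \<union> {v})"

definition TS_reachable ::
  "'a set \<Rightarrow> ('a \<Rightarrow> 'a \<Rightarrow> bool) \<Rightarrow> nat \<Rightarrow> 'a set \<Rightarrow> 'a set \<Rightarrow> bool" where
  "TS_reachable V E k S Z \<longleftrightarrow>
     (\<exists>Is. Is \<noteq> [] \<and> hd Is = S \<and> last Is = Z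
        \<and> (\<forall>I\<in>set Is. indep V E I \<and> card I = k)
        \<and> (\<forall>j. Suc j < length Is \<longrightarrow> slide E (Is ! j) (Is ! Suc j)))"

end

theory Submission
  imports Defs
begin

(* Every constraint set in C_i consists of pairwise disjoint subsets of J_i whose demands
   sum to k (unless one of the subsets is empty, which makes it unsatisfiable), so a
   solution Z of size k lies inside the union of the constraints. If C' arises from C in
   C_(i-1) by branching on (X, b), then Z has exactly one vertex w in N(X), adjacent to
   some u in X; the set Z - {w} + {u} lies in J_(i-1), satisfies C, and slides to Z. *)

definition restrict_constr :: "'a set \<Rightarrow> 'a constr \<Rightarrow> 'a constr" where
  "restrict_constr J c = (fst c \<inter> J, snd c)"

definition decrement :: "'a constr set \<Rightarrow> 'a constr \<Rightarrow> 'a constr set" where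
  "decrement C c = (C - {c}) \<union> (if 2 \<le> snd c then {(fst c, snd c - 1)} else {})"

abbreviation disjoint_constrs :: "'a constr set \<Rightarrow> bool" where
  "disjoint_constrs C \<equiv> pairwise (\<lambda>c d. disjnt (fst c) (fst d)) C"

(* Distinct constraints may collapse to one element of the constraint set once their
   vertex sets become empty, so the demand sum is only tracked while no set is empty. *)
definition admissible :: "'a set \<Rightarrow> nat \<Rightarrow> 'a constr set \<Rightarrow> bool" where
  "admissible I k C \<longleftrightarrow> finite C \<and> (\<forall>c\<in>C. fst c \<subseteq> I \<and> 1 \<le> snd c) \<and> disjoint_constrs C
     \<and> (sum snd C = k \<or> {} \<in> fst ` C)"

lemma branch_eq:
  "branch V E J C c = insert (nbhd V E (fst c) \<inter> J, 1) (restrict_constr J ` decrement C c)"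
proof -
  have "{(X' \<inter> J, b') | X' b'. (X', b') \<in> C \<and> (X', b') \<noteq> c} = restrict_constr J ` (C - {c})"
  proof (intro equalityI subsetI)
    fix p assume "p \<in> {(X' \<inter> J, b') | X' b'. (X', b') \<in> C \<and> (X', b') \<noteq> c}"
    then obtain X' b' where "p = restrict_constr J (X', b')" "(X', b') \<in> C - {c}"
      unfolding restrict_constr_def by auto
    then show "p \<in> restrict_constr J ` (C - {c})" by blast
  next
    fix p assume "p \<in> restrict_constr J ` (C - {c})"
    then obtain d where "d \<in> C - {c}" "p = restrict_constr J d" by blast
    then show "p \<in> {(X' \<inter> J, b') | X' b'. (X', b') \<in> C \<and> (X', b') \<noteq> c}"
      by (cases d) (auto simp: restrict_constr_def)
  qed
  then show ?thesis unfolding branch_def decrement_def by (auto simp: restrict_constr_def)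
qed

lemma nbhd_Int_indep:
  assumes "indep V E I" and "X \<subseteq> I"
  shows "nbhd V E X \<inter> I = {}"
  using assms unfolding indep_def nbhd_def by blast

lemma satisfies_restrict_constr:
  assumes "Z \<subseteq> J"
  shows "satisfies Z (restrict_constr J d) \<longleftrightarrow> satisfies Z d"
proof -
  have "Z \<inter> (fst d \<inter> J) = Z \<inter> fst d" using assms by blast
  then show ?thesis unfolding satisfies_def restrict_constr_def by simp
qed

lemma sum_snd_eq_card_Int_Union:
  assumes "finite C" and "disjoint_constrs C" and "finite Z" and "satisfies_set Z C"
  shows "sum snd C = card (Z \<inter> \<Union> (fst ` C))"
proof -
  have "sum snd C = (\<Sum>c\<in>C. card (Z \<inter> fst c))"
    using assms(4) unfolding satisfies_set_def satisfies_def by (intro sum.cong) auto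
  also have "\<dots> = card (\<Union>c\<in>C. Z \<inter> fst c)"
  proof (rule card_UN_disjoint[symmetric])
    show "\<forall>c\<in>C. \<forall>d\<in>C. c \<noteq> d \<longrightarrow> Z \<inter> fst c \<inter> (Z \<inter> fst d) = {}"
      using assms(2) unfolding pairwise_def disjnt_def by blast
  qed (use assms(1,3) in simp_all)
  also have "(\<Union>c\<in>C. Z \<inter> fst c) = Z \<inter> \<Union> (fst ` C)" by blast
  finally show ?thesis .
qed

lemma admissible_solution_subset_Union:
  assumes "admissible I k C" and "satisfies_set Z C" and "finite Z" and "card Z = k"
  shows "Z \<subseteq> \<Union> (fst ` C)"
proof -
  have C: "finite C" "\<forall>c\<in>C. 1 \<le> snd c" "disjoint_constrs C" "sum snd C = k \<or> {} \<in> fst ` C"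
    using assms(1) unfolding admissible_def by auto
  have "{} \<notin> fst ` C"
  proof
    assume "{} \<in> fst ` C"
    then obtain b where "({}, b) \<in> C" by force
    then show False using C(2) assms(2) unfolding satisfies_set_def satisfies_def by fastforce
  qed
  then have "card (Z \<inter> \<Union> (fst ` C)) = card Z"
    using sum_snd_eq_card_Int_Union[OF C(1,3) assms(3,2)] C(4) assms(4) by simp
  then have "Z \<inter> \<Union> (fst ` C) = Z" using card_subset_eq[OF assms(3) Int_lower1] by blast
  then show ?thesis by blast
qed

lemma decrement_cases:
  assumes "d \<in> decrement C c"
  obtains "d \<in> C" "d \<noteq> c" | "2 \<le> snd c" "d = (fst c, snd c - 1)"
  using assms unfolding decrement_def by (auto split: if_splits)

lemma fst_decrement_subset:
  assumes "c \<in> C"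
  shows "fst ` decrement C c \<subseteq> fst ` C"
  using assms unfolding decrement_def by auto

lemma disjoint_constrs_decrement:
  assumes "disjoint_constrs C" and "c \<in> C"
  shows "disjoint_constrs (decrement C c)"
  using assms unfolding decrement_def pairwise_def disjnt_def by auto

lemma disjoint_constrs_restrict:
  assumes "disjoint_constrs C"
  shows "disjoint_constrs (restrict_constr J ` C)"
proof (rule pairwise_imageI)
  fix c d assume "c \<in> C" "d \<in> C" "c \<noteq> d"
  then show "disjnt (fst (restrict_constr J c)) (fst (restrict_constr J d))"
    using assms unfolding pairwise_def disjnt_def restrict_constr_def by auto
qed

lemma sum_snd_decrement:
  assumes "finite C" and "disjoint_constrs C" and "c \<in> C" and "1 \<le> snd c"
    and "{} \<notin> fst ` decrement C c"
  shows "sum snd (decrement C c) = sum snd C - 1"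
proof -
  have sum_C: "sum snd C = snd c + sum snd (C - {c})"
    using assms(1,3) by (rule sum.remove)
  show ?thesis
  proof (cases "2 \<le> snd c")
    case True
    have "(fst c, snd c - 1) \<notin> C - {c}"
    proof
      assume "(fst c, snd c - 1) \<in> C - {c}"
      then have "fst c = {}"
        using assms(2,3) unfolding pairwise_def disjnt_def by force
      then show False using assms(5) True unfolding decrement_def by force
    qed
    then show ?thesis using True assms(1) sum_C unfolding decrement_def by simp
  next
    case False
    then show ?thesis using assms(4) sum_C unfolding decrement_def by simp
  qed
qed

lemma sum_snd_restrict:
  assumes "finite C" and "disjoint_constrs C" and "{} \<notin> fst ` restrict_constr J ` C"
  shows "sum snd (restrict_constr J ` C) = sum snd C"
proof -
  have "inj_on (restrict_constr J) C"
  proof (rule inj_onI, rule ccontr)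
    fix c d assume "c \<in> C" "d \<in> C" "restrict_constr J c = restrict_constr J d" "c \<noteq> d"
    then have "fst (restrict_constr J c) = {}"
      using assms(2) unfolding pairwise_def disjnt_def restrict_constr_def by auto
    then show False using assms(3) \<open>c \<in> C\<close> by blast
  qed
  then have "sum snd (restrict_constr J ` C) = sum (snd \<circ> restrict_constr J) C"
    by (rule sum.reindex)
  then show ?thesis by (simp add: comp_def restrict_constr_def)
qed

lemma sum_snd_branch:
  assumes "finite C" and "\<forall>d\<in>C. fst d \<subseteq> I" and "disjoint_constrs C" and "c \<in> C"
    and "1 \<le> snd c" and "indep V E I" and "{} \<notin> fst ` branch V E J C c"
  shows "{} \<notin> fst ` C" and "sum snd (branch V E J C c) = sum snd C"
proof -
  define A where "A = (nbhd V E (fst c) \<inter> J, 1::nat)"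
  define D where "D = decrement C c"
  have branch: "branch V E J C c = insert A (restrict_constr J ` D)"
    by (simp add: branch_eq A_def D_def)
  have A_disj: "fst A \<inter> I = {}"
    using nbhd_Int_indep[OF assms(6)] assms(2,4) unfolding A_def by auto
  have "{} \<notin> fst ` restrict_constr J ` D"
    using assms(7) branch by auto
  then have "{} \<notin> fst ` D" by (force simp: restrict_constr_def)
  show "{} \<notin> fst ` C"
  proof
    assume "{} \<in> fst ` C"
    then obtain d where "d \<in> C" "fst d = {}" by auto
    moreover have "fst A \<noteq> {}" using assms(7) branch by auto
    ultimately show False
      using \<open>{} \<notin> fst ` D\<close> unfolding A_def D_def decrement_def nbhd_def by auto
  qed
  have "A \<notin> restrict_constr J ` D"
  proof
    assume "A \<in> restrict_constr J ` D"
    then have "fst A \<subseteq> I"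
      using assms(2) fst_decrement_subset[OF assms(4)] unfolding D_def restrict_constr_def
      by fastforce
    then show False using A_disj assms(7) branch by auto
  qed
  have finite_D: "finite D" using assms(1) by (simp add: D_def decrement_def)
  have disjoint_D: "disjoint_constrs D"
    using assms(3,4) by (simp add: D_def disjoint_constrs_decrement)
  have "sum snd (branch V E J C c) = 1 + sum snd (restrict_constr J ` D)"
    using \<open>A \<notin> restrict_constr J ` D\<close> finite_D branch by (simp add: A_def)
  also have "\<dots> = 1 + sum snd D"
    using sum_snd_restrict[OF finite_D disjoint_D] \<open>{} \<notin> fst ` restrict_constr J ` D\<close> by simp
  also have "\<dots> = 1 + (sum snd C - 1)"
    using sum_snd_decrement assms(1,3-5) \<open>{} \<notin> fst ` D\<close> D_def by simp
  also have "\<dots> = sum snd C"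
    using member_le_sum[of c C snd] assms(1,4,5) by fastforce
  finally show "sum snd (branch V E J C c) = sum snd C" .
qed

lemma admissible_branch:
  assumes "admissible I k C" and "c \<in> C" and "indep V E I"
  shows "admissible J k (branch V E J C c)"
proof -
  have C: "finite C" "\<forall>d\<in>C. fst d \<subseteq> I \<and> 1 \<le> snd d" "disjoint_constrs C"
    "sum snd C = k \<or> {} \<in> fst ` C"
    using assms(1) unfolding admissible_def by auto
  define A where "A = (nbhd V E (fst c) \<inter> J, 1::nat)"
  define R where "R = restrict_constr J ` decrement C c"
  have branch: "branch V E J C c = insert A R"
    by (simp add: branch_eq A_def R_def)
  have R_sub: "fst d \<subseteq> I \<inter> J" if "d \<in> R" for d
    using that C(2) fst_decrement_subset[OF assms(2)] unfolding R_def restrict_constr_def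
    by fastforce
  have R_pos: "1 \<le> snd d" if "d \<in> R" for d
    using that C(2) assms(2) unfolding R_def restrict_constr_def
    by (auto elim!: decrement_cases)
  have "fst A \<inter> I = {}"
    using nbhd_Int_indep[OF assms(3)] C(2) assms(2) unfolding A_def by auto
  then have "disjoint_constrs (insert A R)"
    using R_sub disjoint_constrs_restrict disjoint_constrs_decrement[OF C(3) assms(2)]
    unfolding R_def pairwise_insert disjnt_def by blast
  moreover have "finite (insert A R)"
    using C(1) by (simp add: R_def decrement_def)
  moreover have "\<forall>d\<in>insert A R. fst d \<subseteq> J \<and> 1 \<le> snd d"
    using R_sub R_pos by (auto simp: A_def)
  moreover have "sum snd (insert A R) = k \<or> {} \<in> fst ` insert A R"
    using sum_snd_branch[of C I c V E J] C assms(2,3) branch by auto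
  ultimately show ?thesis unfolding admissible_def branch by blast
qed

lemma admissible_Cfam:
  assumes "J 0 = S" and "1 \<le> k" and "\<forall>j<i. indep V E (J j)" and "C \<in> Cfam V E S k J i"
  shows "admissible (J i) k C"
  using assms(3,4)
proof (induction i arbitrary: C)
  case 0
  then show ?case using assms(1,2) by (simp add: admissible_def)
next
  case (Suc i)
  then obtain C0 c where C: "C = branch V E (J (Suc i)) C0 c" "C0 \<in> Cfam V E S k J i" "c \<in> C0"
    by auto
  have "admissible (J i) k C0" and "indep V E (J i)"
    using Suc.IH C(2) Suc.prems(1) by simp_all
  then show ?case using C admissible_branch by blast
qed

lemma satisfies_set_insert_decrement:
  assumes "disjoint_constrs C" and "c \<in> C" and "1 \<le> snd c" and "finite Y"
    and "satisfies_set Y (decrement C c)" and "Y \<subseteq> \<Union> (fst ` decrement C c)"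
    and "u \<in> fst c" and "u \<notin> Y"
  shows "satisfies_set (insert u Y) C"
  unfolding satisfies_set_def satisfies_def
proof
  fix d assume "d \<in> C"
  show "card (insert u Y \<inter> fst d) = snd d"
  proof (cases "d = c")
    case True
    have "card (Y \<inter> fst c) = snd c - 1"
    proof (cases "2 \<le> snd c")
      case True
      then have "(fst c, snd c - 1) \<in> decrement C c" by (simp add: decrement_def)
      then show ?thesis using assms(5) by (auto simp: satisfies_set_def satisfies_def)
    next
      case False
      then have "Y \<subseteq> \<Union> (fst ` (C - {c}))" using assms(6) by (simp add: decrement_def)
      then have "Y \<inter> fst c = {}"
        using assms(1,2) unfolding pairwise_def disjnt_def by blast
      then show ?thesis using False by simp
    qed
    then show ?thesis using True assms(3,4,7,8) by simp
  next
    case False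
    then have "d \<in> decrement C c" using \<open>d \<in> C\<close> by (simp add: decrement_def)
    moreover have "u \<notin> fst d"
      using assms(1,2,7) False \<open>d \<in> C\<close> unfolding pairwise_def disjnt_def by blast
    ultimately show ?thesis using assms(5) by (simp add: satisfies_set_def satisfies_def)
  qed
qed


lemma slide_back_from_branch:
  assumes "indep V E I" and "indep V E J"
    and "\<forall>d\<in>C. fst d \<subseteq> I" and "disjoint_constrs C" and "c \<in> C" and "1 \<le> snd c"
    and "Z \<subseteq> J" and "finite Z" and "satisfies_set Z (branch V E J C c)"
    and "Z \<subseteq> \<Union> (fst ` branch V E J C c)"
  obtains Z' where "Z' \<subseteq> I" and "card Z' = card Z" and "satisfies_set Z' C" and "slide E Z' Z"
proof -
  let ?D = "decrement C c"
  have "card (Z \<inter> (nbhd V E (fst c) \<inter> J)) = 1"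
    using assms(9) unfolding satisfies_set_def satisfies_def branch_eq by simp
  moreover have "Z \<inter> (nbhd V E (fst c) \<inter> J) = Z \<inter> nbhd V E (fst c)" using assms(7) by blast
  ultimately obtain w where w: "Z \<inter> nbhd V E (fst c) = {w}" by (metis card_1_singletonE)
  then obtain u where u: "u \<in> fst c" "E u w" and w_notin: "w \<notin> fst c" "w \<in> Z"
    unfolding nbhd_def by blast
  have "u \<notin> Z" using assms(2,7) u(2) w_notin(2) unfolding indep_def by blast
  have "w \<notin> I" using nbhd_Int_indep[OF assms(1)] assms(3,5) w by blast
  have D_sub: "\<Union> (fst ` ?D) \<subseteq> I" using fst_decrement_subset[OF assms(5)] assms(3) by blast
  define Y where "Y = Z - {w}"
  have Y_cover: "Y \<subseteq> \<Union> (fst ` ?D)"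
  proof
    fix y assume "y \<in> Y"
    then obtain d where "d \<in> branch V E J C c" "y \<in> fst d" "y \<noteq> w" "y \<in> Z"
      using assms(10) unfolding Y_def by blast
    from \<open>d \<in> branch V E J C c\<close> consider "d = (nbhd V E (fst c) \<inter> J, 1)"
      | d' where "d' \<in> ?D" "d = restrict_constr J d'"
      unfolding branch_eq by blast
    then show "y \<in> \<Union> (fst ` ?D)"
    proof cases
      case 1
      then show ?thesis using w \<open>y \<in> fst d\<close> \<open>y \<noteq> w\<close> \<open>y \<in> Z\<close> by auto
    next
      case 2
      then show ?thesis using \<open>y \<in> fst d\<close> by (auto simp: restrict_constr_def)
    qed
  qed
  have "satisfies_set Y ?D"
    unfolding satisfies_set_def
  proof
    fix d assume "d \<in> ?D"
    then have "satisfies Z d"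
      using assms(7,9) satisfies_restrict_constr unfolding satisfies_set_def branch_eq by blast
    moreover have "Y \<inter> fst d = Z \<inter> fst d"
      using \<open>d \<in> ?D\<close> D_sub \<open>w \<notin> I\<close> unfolding Y_def by blast
    ultimately show "satisfies Y d" unfolding satisfies_def by simp
  qed
  moreover have "finite Y" using assms(8) unfolding Y_def by simp
  moreover have "u \<notin> Y" using \<open>u \<notin> Z\<close> unfolding Y_def by simp
  ultimately have "satisfies_set (insert u Y) C"
    using satisfies_set_insert_decrement[OF assms(4-6)] Y_cover u(1) by simp
  moreover have "insert u Y \<subseteq> I" using Y_cover D_sub u(1) assms(3,5) by auto
  moreover have "card (insert u Y) = card Z"
  proof -
    have "card (insert u Y) = Suc (card Z - 1)"
      using assms(8) w_notin(2) \<open>u \<notin> Y\<close> \<open>finite Y\<close> unfolding Y_def by simp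
    moreover have "0 < card Z" using assms(8) w_notin(2) card_gt_0_iff by blast
    ultimately show ?thesis by linarith
  qed
  moreover have "slide E (insert u Y) Z"
    unfolding slide_def
  proof (intro exI conjI)
    show "Z = insert u Y - {u} \<union> {w}" using \<open>u \<notin> Y\<close> w_notin(2) unfolding Y_def by auto
  qed (use u w_notin \<open>u \<notin> Y\<close> in \<open>auto simp: Y_def\<close>)
  ultimately show thesis using that by blast
qed

lemma TS_reachable_refl:
  assumes "indep V E S" and "card S = k"
  shows "TS_reachable V E k S S"
  unfolding TS_reachable_def using assms by (intro exI[of _ "[S]"]) simp

lemma TS_reachable_slide:
  assumes "TS_reachable V E k S Y" and "slide E Y Z" and "indep V E Z" and "card Z = k"
  shows "TS_reachable V E k S Z"
proof -
  obtain Is where Is: "Is \<noteq> []" "hd Is = S" "last Is = Y"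
    "\<forall>I\<in>set Is. indep V E I \<and> card I = k"
    "\<forall>j. Suc j < length Is \<longrightarrow> slide E (Is ! j) (Is ! Suc j)"
    using assms(1) unfolding TS_reachable_def by blast
  have "slide E ((Is @ [Z]) ! j) ((Is @ [Z]) ! Suc j)" if "Suc j < length (Is @ [Z])" for j
  proof (cases "Suc j < length Is")
    case True
    then show ?thesis using Is(5) by (simp add: nth_append)
  next
    case False
    then have "j = length Is - 1" using that by simp
    then show ?thesis using Is(1,3) assms(2) by (simp add: nth_append last_conv_nth)
  qed
  then show ?thesis
    unfolding TS_reachable_def using Is(1-4) assms(3,4) by (intro exI[of _ "Is @ [Z]"]) auto
qed

lemma TS_reachable_Cfam:
  assumes "indep V E S" and "card S = k" and "1 \<le> k" and "J 0 = S"
    and "\<forall>j\<le>i. indep V E (J j)" and "C \<in> Cfam V E S k J i"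
    and "Z \<subseteq> J i" and "card Z = k" and "satisfies_set Z C"
  shows "TS_reachable V E k S Z"
  using assms(5-9)
proof (induction i arbitrary: C Z)
  case 0
  have "finite S" using assms(2,3) card_gt_0_iff by force
  then have "Z = S" using card_subset_eq[OF \<open>finite S\<close>, of Z] 0 assms(2,4) by simp
  then show ?case using TS_reachable_refl assms(1,2) by blast
next
  case (Suc i)
  obtain C0 c where C: "C = branch V E (J (Suc i)) C0 c" "C0 \<in> Cfam V E S k J i" "c \<in> C0"
    using Suc.prems(2) by auto
  have indep_J: "indep V E (J i)" "indep V E (J (Suc i))" using Suc.prems(1) by simp_all
  have C0: "admissible (J i) k C0"
    using admissible_Cfam[OF assms(4,3) _ C(2)] Suc.prems(1) by simp
  then have C0_props: "\<forall>d\<in>C0. fst d \<subseteq> J i" "disjoint_constrs C0" "1 \<le> snd c"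
    using C(3) unfolding admissible_def by auto
  have "finite Z" using Suc.prems(4) assms(3) card_gt_0_iff by force
  have "admissible (J (Suc i)) k C"
    unfolding C(1) by (rule admissible_branch[OF C0 C(3) indep_J(1)])
  then have "Z \<subseteq> \<Union> (fst ` C)"
    using admissible_solution_subset_Union Suc.prems(4,5) \<open>finite Z\<close> by blast
  then obtain Z' where Z': "Z' \<subseteq> J i" "card Z' = card Z" "satisfies_set Z' C0" "slide E Z' Z"
    using slide_back_from_branch[OF indep_J C0_props(1,2) C(3) C0_props(3) Suc.prems(3) \<open>finite Z\<close>]
      Suc.prems(5) unfolding C(1) by blast
  have "TS_reachable V E k S Z'"
    by (rule Suc.IH[OF _ C(2) Z'(1) _ Z'(3)]) (use Suc.prems(1,4) Z'(2) in simp_all)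
  moreover have "indep V E Z" using indep_J(2) Suc.prems(3) unfolding indep_def by blast
  ultimately show ?case using TS_reachable_slide Z'(4) Suc.prems(4) by blast
qed

theorem lemma3p5:
  fixes V :: "'a set" and E :: "'a \<Rightarrow> 'a \<Rightarrow> bool"
    and S Z :: "'a set" and J :: "nat \<Rightarrow> 'a set" and k l i :: nat
  assumes "simple_graph V E"
    and "k \<ge> 1" and "l \<ge> 1"
    and "indep V E S" and "card S = k"
    and "J 0 = S"
    and "\<forall>j\<in>{1..l}. indep V E (J j)"
    and "i \<le> l"
    and "Z \<subseteq> J i" and "indep V E Z" and "card Z = k"
    and "\<exists>C\<in>Cfam V E S k J i. satisfies_set Z C"
  shows "TS_reachable V E k S Z"
proof -
  have "\<forall>j\<le>i. indep V E (J j)"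
  proof (intro allI impI)
    fix j assume "j \<le> i"
    then show "indep V E (J j)" using assms(4,6-8) by (cases j) auto
  qed
  then show ?thesis using TS_reachable_Cfam assms(2,4-6,9,11,12) by blast
qed

end
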